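(* Let $\Sigma=(X,\mathcal{S},\phi)$ be a forward complete dynamical system. Let $t_1>0$, $G_0>0$, and let $\beta$ be a function of class $\mathcal{K}_\infty$ such that $\limsup_{r\downarrow 0}\frac{\beta(r)}{r}<+\infty$ and $$\|\phi(t,x,\sigma)\|\le G_0\,\beta(\|x\|)\quad \text{for all } t\in[0,t_1],\ x\in X,\ \sigma\in\mathcal{S}.$$ Then the following statements are equivalent: (i) $\Sigma$ is ULES; (ii) for every $p>0$ there exist a nondecreasing function $k:\mathbb{R}_+\to\mathbb{R}_+$ and $R>0$ such that $$\int_0^{+\infty}\|\phi(t,x,\sigma)\|^p\,dt\le k(\|x\|)^p\|x\|^p\quad\text{for all } x\in B_X(0,R),\ \sigma\in\mathcal{S};$$ (iii) there exist $p>0$, a nondecreasing function $k:\mathbb{R}_+\to\mathbb{R}_+$, and $R>0$ such that the inequality in (ii) holds for all $x\in B_X(0,R)$ and $\sigma\in\mathcal{S}$.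
   Context: $(X,\|\cdot\|)$ is a Banach space and $B_X(x,r)$ denotes the closed ball of center $x$ and radius $r$. A function $\alpha:\mathbb{R}_+\to\mathbb{R}_+$ is of class $\mathcal{K}$ if it is continuous, increasing and $\alpha(0)=0$; of class $\mathcal{K}_\infty$ if moreover unbounded. Let $\mathcal{Q}$ be a nonempty set and $\mathcal{S}$ a set of functions $\sigma:\mathbb{R}_+\to\mathcal{Q}$ which is closed by time-shift (for $\sigma\in\mathcal{S}$, $\tau\ge0$, the function $\mathbb{T}_\tau\sigma:s\mapsto\sigma(\tau+s)$ is in $\mathcal{S}$) and closed by concatenation (for $\sigma_1,\sigma_2\in\mathcal{S}$, $\tau>0$, the function equal to $\sigma_1$ on $[0,\tau]$ and with $\sigma(\tau+t)=\sigma_2(t)$ for $t>0$ is in $\mathcal{S}$). A triple $\Sigma=(X,\mathcal{S},\phi)$ with $\phi:\mathbb{R}_+\times X\times\mathcal{S}\to X$ is a forward complete dynamical system if: (i) $\phi(0,x,\sigma)=x$; (ii) if $\tilde\sigma=\sigma$ on $[0,t]$ then $\phi(t,x,\tilde\sigma)=\phi(t,x,\sigma)$; (iii) $t\mapsto\phi(t,x,\sigma)$ is continuous; (iv) $\phi(\tau,\phi(t,x,\sigma),\mathbb{T}_t\sigma)=\phi(t+\tau,x,\sigma)$ for all $t,\tau\ge0$, $x\in X$, $\sigma\in\mathcal{S}$. $\Sigma$ is uniformly locally exponentially stable at the origin (ULES) if there exist $R,M,\lambda>0$ such that $\|\phi(t,x,\sigma)\|\le Me^{-\lambda t}\|x\|$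 for all $t\ge0$, $x\in B_X(0,R)$, $\sigma\in\mathcal{S}$. *)

theory Defs
  imports "HOL-Analysis.Analysis"
begin

definition tshift :: "real \<Rightarrow> (real \<Rightarrow> 'q) \<Rightarrow> (real \<Rightarrow> 'q)" where
  "tshift \<tau> \<sigma> = (\<lambda>s. \<sigma> (\<tau> + s))"

definition concat_sig :: "(real \<Rightarrow> 'q) \<Rightarrow> real \<Rightarrow> (real \<Rightarrow> 'q) \<Rightarrow> (real \<Rightarrow> 'q)" where
  "concat_sig \<sigma>1 \<tau> \<sigma>2 = (\<lambda>t. if t \<le> \<tau> then \<sigma>1 t else \<sigma>2 (t - \<tau>))"

definition shift_closed :: "(real \<Rightarrow> 'q) set \<Rightarrow> bool" where
  "shift_closed S \<longleftrightarrow> (\<forall>\<sigma>\<in>S. \<forall>\<tau>\<ge>0. tshift \<tau> \<sigma> \<in> S)"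

definition concat_closed :: "(real \<Rightarrow> 'q) set \<Rightarrow> bool" where
  "concat_closed S \<longleftrightarrow> (\<forall>\<sigma>1\<in>S. \<forall>\<sigma>2\<in>S. \<forall>\<tau>>0. concat_sig \<sigma>1 \<tau> \<sigma>2 \<in> S)"

definition fc_dyn_sys ::
  "(real \<Rightarrow> 'q) set \<Rightarrow> (real \<Rightarrow> 'x::banach \<Rightarrow> (real \<Rightarrow> 'q) \<Rightarrow> 'x) \<Rightarrow> bool" where
  "fc_dyn_sys S \<phi> \<longleftrightarrow>
     shift_closed S \<and> concat_closed S \<and>
     (\<forall>x. \<forall>\<sigma>\<in>S. \<phi> 0 x \<sigma> = x) \<and>
     (\<forall>t\<ge>0. \<forall>x. \<forall>\<sigma>\<in>S. \<forall>\<sigma>'\<in>S. (\<forall>s\<in>{0..t}. \<sigma>' s = \<sigma> s) \<longrightarrow> \<phi> t x \<sigma>' = \<phi> t x \<sigma>) \<and>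
     (\<forall>x. \<forall>\<sigma>\<in>S. continuous_on {0..} (\<lambda>t. \<phi> t x \<sigma>)) \<and>
     (\<forall>t\<ge>0. \<forall>\<tau>\<ge>0. \<forall>x. \<forall>\<sigma>\<in>S. \<phi> \<tau> (\<phi> t x \<sigma>) (tshift t \<sigma>) = \<phi> (t + \<tau>) x \<sigma>)"

definition class_K :: "(real \<Rightarrow> real) \<Rightarrow> bool" where
  "class_K \<alpha> \<longleftrightarrow> continuous_on {0..} \<alpha> \<and> strict_mono_on {0..} \<alpha> \<and> \<alpha> 0 = 0"

definition class_Kinf :: "(real \<Rightarrow> real) \<Rightarrow> bool" where
  "class_Kinf \<alpha> \<longleftrightarrow> class_K \<alpha> \<and> (\<forall>M. \<exists>r\<ge>0. \<alpha> r > M)"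

definition ULES ::
  "(real \<Rightarrow> 'q) set \<Rightarrow> (real \<Rightarrow> 'x::banach \<Rightarrow> (real \<Rightarrow> 'q) \<Rightarrow> 'x) \<Rightarrow> bool" where
  "ULES S \<phi> \<longleftrightarrow> (\<exists>R>0. \<exists>M>0. \<exists>lam>0. \<forall>t\<ge>0. \<forall>x\<in>cball 0 R. \<forall>\<sigma>\<in>S.
      norm (\<phi> t x \<sigma>) \<le> M * exp (- lam * t) * norm x)"

text \<open>The integral estimate of items (ii)/(iii), as a (possibly infinite) Lebesgue integral of a nonnegative function.\<close>
definition int_estimate ::
  "(real \<Rightarrow> 'q) set \<Rightarrow> (real \<Rightarrow> 'x::banach \<Rightarrow> (real \<Rightarrow> 'q) \<Rightarrow> 'x) \<Rightarrow> real \<Rightarrow> (real \<Rightarrow> real) \<Rightarrow> real \<Rightarrow> bool" where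
  "int_estimate S \<phi> p k R \<longleftrightarrow> (\<forall>x\<in>cball 0 R. \<forall>\<sigma>\<in>S.
      (\<integral>\<^sup>+ t \<in> {0..}. ennreal (norm (\<phi> t x \<sigma>) powr p) \<partial>lborel)
        \<le> ennreal (k (norm x) powr p * norm x powr p))"

definition nondecr_nonneg :: "(real \<Rightarrow> real) \<Rightarrow> bool" where
  "nondecr_nonneg k \<longleftrightarrow> mono_on {0..} k \<and> (\<forall>r\<ge>0. k r \<ge> 0)"

end

theory Submission
  imports Defs
begin

text \<open>
  (i) \<open>\<Longrightarrow>\<close> (ii) follows by integrating the exponential bound. For (iii) \<open>\<Longrightarrow>\<close> (i), the
  condition on \<open>\<beta>\<close> makes trajectories from a small ball grow at most linearly in \<open>\<parallel>x\<parallel>\<close> on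
  \<open>[0, t\<^sub>1]\<close>. By the cocycle property, if \<open>\<parallel>\<phi>(t)\<parallel>\<close> is large then \<open>\<parallel>\<phi>(s)\<parallel>\<close> is
  comparably large on a whole window of earlier times, so the integral estimate bounds
  \<open>\<parallel>\<phi>(t)\<parallel>\<close>. Applied inductively on windows of length \<open>t\<^sub>1\<close> this gives a uniform bound
  \<open>\<parallel>\<phi>(t,x,\<sigma>)\<parallel> \<le> M\<parallel>x\<parallel>\<close>, and applied to the window \<open>[0, t]\<close> the decay
  \<open>t\<^sup>1\<^sup>/\<^sup>p\<parallel>\<phi>(t,x,\<sigma>)\<parallel> \<le> MK\<parallel>x\<parallel>\<close>. Thus the norm is halved after a fixed time, and iterating
  the halving gives exponential decay.
\<close>

lemma nn_integral_exp_neg_atLeast_0: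
  fixes a :: real
  assumes "a > 0"
  shows "(\<integral>\<^sup>+ t \<in> {0..}. ennreal (exp (- a * t)) \<partial>lborel) = ennreal (1 / a)"
proof -
  have "((\<lambda>t. exp (- a * t)) has_integral exp (- a * 0) / a) {0..}"
    using has_integral_exp_minus_to_infinity[OF assms] .
  then have "(\<integral>\<^sup>+ t. ennreal (exp (- a * t)) * indicator {0..} t \<partial>lborel) = ennreal (exp (- a * 0) / a)"
    by (intro nn_integral_has_integral_lebesgue') auto
  then show ?thesis by simp
qed

lemma window_bound_of_nn_integral_powr:
  fixes g :: "real \<Rightarrow> real"
  assumes p: "p > 0" and a: "a \<ge> 0" and d: "d \<ge> 0" and c: "c \<ge> 0" and B: "B \<ge> 0"
    and above: "\<And>s. s \<in> {a..a+d} \<Longrightarrow> c \<le> g s"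
    and integral: "(\<integral>\<^sup>+ s \<in> {0..}. ennreal (g s powr p) \<partial>lborel) \<le> ennreal (B powr p)"
  shows "d powr (1/p) * c \<le> B"
proof -
  have "ennreal (d * c powr p) = (\<integral>\<^sup>+ s. ennreal (c powr p) * indicator {a..a+d} s \<partial>lborel)"
    using d by (simp add: nn_integral_cmult_indicator ennreal_mult' mult.commute)
  also have "\<dots> \<le> (\<integral>\<^sup>+ s \<in> {0..}. ennreal (g s powr p) \<partial>lborel)"
  proof (rule nn_integral_mono)
    fix s
    have "c powr p \<le> g s powr p" if "s \<in> {a..a+d}"
      using above[OF that] c p by (intro powr_mono2) auto
    then show "ennreal (c powr p) * indicator {a..a+d} s \<le> ennreal (g s powr p) * indicator {0..} s"
      using a by (auto simp: indicator_def)
  qed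
  also have "\<dots> \<le> ennreal (B powr p)" by (rule integral)
  finally have "d * c powr p \<le> B powr p"
    by (simp add: ennreal_le_iff)
  then have "(d * c powr p) powr (1/p) \<le> (B powr p) powr (1/p)"
    using d c p by (intro powr_mono2) auto
  then show ?thesis
    using p d c B by (simp add: powr_mult powr_powr)
qed

lemma power_half_le_exp:
  assumes T: "T > 0" and t: "t < (real n + 1) * T"
  shows "(1/2::real) ^ n \<le> 2 * exp (- (ln 2 / T) * t)"
proof -
  have "t / T < real n + 1"
    using t T by (simp add: divide_less_eq)
  then have "(t / T - 1) * ln 2 \<le> real n * ln 2"
    by (intro mult_right_mono) auto
  then have "- (real n * ln 2) \<le> ln 2 + (- (ln 2 / T) * t)"
    by (simp add: algebra_simps)
  have "(1/2::real) ^ n = exp (- (real n * ln 2))"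
    by (simp add: exp_minus exp_of_nat_mult power_one_over inverse_eq_divide)
  also have "\<dots> \<le> exp (ln 2 + (- (ln 2 / T) * t))"
    using \<open>- (real n * ln 2) \<le> ln 2 + (- (ln 2 / T) * t)\<close> by simp
  also have "\<dots> = 2 * exp (- (ln 2 / T) * t)"
    by (simp only: exp_add exp_ln_iff) simp
  finally show ?thesis .
qed

lemma linear_bound_near_0:
  fixes \<beta> :: "real \<Rightarrow> real"
  assumes mono: "mono_on {0..} \<beta>" and \<beta>0: "\<beta> 0 = 0"
    and limsup: "Limsup (at_right 0) (\<lambda>r. ereal (\<beta> r / r)) < \<infinity>"
    and R: "R > 0"
  obtains C where "C \<ge> 0" and "\<And>r. r \<in> {0..R} \<Longrightarrow> \<beta> r \<le> C * r"
proof -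
  obtain n :: nat where "Limsup (at_right 0) (\<lambda>r. ereal (\<beta> r / r)) < ereal (real n)"
    using limsup less_PInf_Ex_of_nat by (metis less_irrefl)
  then have "\<forall>\<^sub>F r in at_right 0. ereal (\<beta> r / r) < ereal (real n)"
    by (rule Limsup_lessD)
  then obtain b :: real where b: "b > 0" and below_b: "\<And>r. 0 < r \<Longrightarrow> r < b \<Longrightarrow> \<beta> r / r < real n"
    unfolding eventually_at_right_field by auto
  have \<beta>_le: "\<beta> r \<le> \<beta> s" if "0 \<le> r" "r \<le> s" for r s
    using mono that unfolding mono_on_def by auto
  define C where "C = max (real n) (\<beta> R / b)"
  have "\<beta> r \<le> C * r" if r: "r \<in> {0..R}" for r
  proof (cases "r < b")
    case True
    have "\<beta> r \<le> real n * r"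
    proof (cases "r = 0")
      case False
      then have "\<beta> r / r < real n" using below_b True r by simp
      then show ?thesis using False r by (simp add: divide_less_eq)
    qed (simp add: \<beta>0)
    also have "\<dots> \<le> C * r"
      unfolding C_def using r by (intro mult_right_mono) auto
    finally show ?thesis .
  next
    case False
    have "\<beta> R \<ge> 0" using \<beta>_le[of 0 R] R \<beta>0 by simp
    have "\<beta> r \<le> (\<beta> R / b) * b" using \<beta>_le r b by simp
    also have "\<dots> \<le> (\<beta> R / b) * r" using False \<open>\<beta> R \<ge> 0\<close> b by (intro mult_left_mono) auto
    also have "\<dots> \<le> C * r" unfolding C_def using r by (intro mult_right_mono) auto
    finally show ?thesis .
  qed
  moreover have "C \<ge> 0" unfolding C_def by simp
  ultimately show ?thesis using that by blast
qed

lemma linear_bound_of_class_K_bound: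
  fixes \<phi> :: "real \<Rightarrow> 'x::real_normed_vector \<Rightarrow> 's \<Rightarrow> 'x"
  assumes \<beta>: "class_K \<beta>" and limsup: "Limsup (at_right 0) (\<lambda>r. ereal (\<beta> r / r)) < \<infinity>"
    and R: "R > 0" and G0: "G0 \<ge> 0"
    and bound: "\<And>t x \<sigma>. t \<in> I \<Longrightarrow> \<sigma> \<in> S \<Longrightarrow> norm (\<phi> t x \<sigma>) \<le> G0 * \<beta> (norm x)"
  obtains L where "L \<ge> 1"
    and "\<And>t x \<sigma>. t \<in> I \<Longrightarrow> norm x \<le> R \<Longrightarrow> \<sigma> \<in> S \<Longrightarrow> norm (\<phi> t x \<sigma>) \<le> L * norm x"
proof -
  have "mono_on {0..} \<beta>" and "\<beta> 0 = 0"
    using \<beta> strict_mono_on_imp_mono_on unfolding class_K_def by auto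
  then obtain C where C: "C \<ge> 0" and \<beta>_le: "\<And>r. r \<in> {0..R} \<Longrightarrow> \<beta> r \<le> C * r"
    using linear_bound_near_0 limsup R by blast
  have "norm (\<phi> t x \<sigma>) \<le> max 1 (G0 * C) * norm x" if "t \<in> I" "norm x \<le> R" "\<sigma> \<in> S" for t x \<sigma>
  proof -
    have "norm (\<phi> t x \<sigma>) \<le> G0 * \<beta> (norm x)"
      using bound that by blast
    also have "\<dots> \<le> G0 * (C * norm x)"
      using \<beta>_le[of "norm x"] that(2) G0 by (intro mult_left_mono) auto
    also have "\<dots> \<le> max 1 (G0 * C) * norm x"
      by (simp add: mult.assoc[symmetric] mult_right_mono)
    finally show ?thesis .
  qed
  then show ?thesis
    using that[of "max 1 (G0 * C)"] by simp
qed

lemma nn_integral_powr_le_of_exp_bound: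
  fixes g :: "real \<Rightarrow> real"
  assumes p: "p > 0" and lam: "lam > 0" and M: "M \<ge> 0" and a: "a \<ge> 0"
    and bound: "\<And>t. t \<ge> 0 \<Longrightarrow> 0 \<le> g t \<and> g t \<le> M * exp (- lam * t) * a"
  shows "(\<integral>\<^sup>+ t \<in> {0..}. ennreal (g t powr p) \<partial>lborel) \<le> ennreal (M powr p / (lam * p) * a powr p)"
proof -
  have "(\<integral>\<^sup>+ t \<in> {0..}. ennreal (g t powr p) \<partial>lborel)
      \<le> (\<integral>\<^sup>+ t. ennreal (M powr p * a powr p) * (ennreal (exp (- (lam * p) * t)) * indicator {0..} t) \<partial>lborel)"
  proof (rule nn_integral_mono)
    fix t :: real
    have "g t powr p \<le> M powr p * a powr p * exp (- (lam * p) * t)" if "t \<ge> 0"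
    proof -
      have "g t powr p \<le> (M * exp (- lam * t) * a) powr p"
        using bound[OF that] p by (intro powr_mono2) auto
      also have "\<dots> = M powr p * a powr p * exp (- (lam * p) * t)"
        using M a by (simp add: powr_mult exp_powr_real mult_ac)
      finally show ?thesis .
    qed
    then show "ennreal (g t powr p) * indicator {0..} t
        \<le> ennreal (M powr p * a powr p) * (ennreal (exp (- (lam * p) * t)) * indicator {0..} t)"
      by (simp add: indicator_def ennreal_mult[symmetric])
  qed
  also have "\<dots> = ennreal (M powr p * a powr p) * (\<integral>\<^sup>+ t \<in> {0..}. ennreal (exp (- (lam * p) * t)) \<partial>lborel)"
    by (rule nn_integral_cmult) measurable
  also have "\<dots> = ennreal (M powr p * a powr p) * ennreal (1 / (lam * p))"
    using nn_integral_exp_neg_atLeast_0[of "lam * p"] lam p by simp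
  also have "\<dots> = ennreal (M powr p / (lam * p) * a powr p)"
    using lam p by (simp add: ennreal_mult[symmetric])
  finally show ?thesis .
qed

lemma ULES_imp_int_estimate:
  fixes \<phi> :: "real \<Rightarrow> 'x::banach \<Rightarrow> (real \<Rightarrow> 'q) \<Rightarrow> 'x"
  assumes "ULES S \<phi>" and p: "p > 0"
  shows "\<exists>k R. nondecr_nonneg k \<and> R > 0 \<and> int_estimate S \<phi> p k R"
proof -
  obtain R M lam where R: "R > 0" and M: "M > 0" and lam: "lam > 0"
    and decay: "\<And>t x \<sigma>. t \<ge> 0 \<Longrightarrow> x \<in> cball 0 R \<Longrightarrow> \<sigma> \<in> S \<Longrightarrow> norm (\<phi> t x \<sigma>) \<le> M * exp (- lam * t) * norm x"
    using assms(1) unfolding ULES_def by blast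
  define c where "c = (M powr p / (lam * p)) powr (1/p)"
  have c_powr: "c powr p = M powr p / (lam * p)"
    unfolding c_def using p lam by (simp add: powr_powr)
  have "int_estimate S \<phi> p (\<lambda>_. c) R"
    unfolding int_estimate_def
  proof (intro ballI)
    fix x :: 'x and \<sigma> assume "x \<in> cball 0 R" "\<sigma> \<in> S"
    then show "(\<integral>\<^sup>+ t \<in> {0..}. ennreal (norm (\<phi> t x \<sigma>) powr p) \<partial>lborel) \<le> ennreal (c powr p * norm x powr p)"
      unfolding c_powr by (intro nn_integral_powr_le_of_exp_bound) (use p lam M decay in auto)
  qed
  moreover have "nondecr_nonneg (\<lambda>_. c)"
    unfolding nondecr_nonneg_def c_def by (simp add: mono_on_def)
  ultimately show ?thesis
    using R by blast
qed

lemma int_estimate_powr_mult: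
  assumes "int_estimate S \<phi> p (\<lambda>_. K) R" and "K \<ge> 0" and "norm x \<le> R" and "\<sigma> \<in> S"
  shows "(\<integral>\<^sup>+ t \<in> {0..}. ennreal (norm (\<phi> t x \<sigma>) powr p) \<partial>lborel) \<le> ennreal ((K * norm x) powr p)"
  using assms by (simp add: int_estimate_def powr_mult)

lemma int_estimate_const_of_nondecr:
  fixes \<phi> :: "real \<Rightarrow> 'x::banach \<Rightarrow> (real \<Rightarrow> 'q) \<Rightarrow> 'x"
  assumes k: "nondecr_nonneg k" and p: "p > 0" and R: "R > 0" and est: "int_estimate S \<phi> p k R"
  shows "int_estimate S \<phi> p (\<lambda>_. k R) R"
  unfolding int_estimate_def
proof (intro ballI)
  fix x :: 'x and \<sigma> assume x: "x \<in> cball 0 R" and \<sigma>: "\<sigma> \<in> S"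
  have "k (norm x) powr p \<le> k R powr p"
    using k x R p unfolding nondecr_nonneg_def mono_on_def by (intro powr_mono2) auto
  then have "k (norm x) powr p * norm x powr p \<le> k R powr p * norm x powr p"
    by (intro mult_right_mono) auto
  then show "(\<integral>\<^sup>+ t \<in> {0..}. ennreal (norm (\<phi> t x \<sigma>) powr p) \<partial>lborel) \<le> ennreal (k R powr p * norm x powr p)"
    using est x \<sigma> unfolding int_estimate_def by (meson ennreal_leI order_trans)
qed

locale fc_dynamical_system =
  fixes S :: "(real \<Rightarrow> 'q) set" and \<phi> :: "real \<Rightarrow> 'x::banach \<Rightarrow> (real \<Rightarrow> 'q) \<Rightarrow> 'x"
  assumes fc_dyn_sys: "fc_dyn_sys S \<phi>"
begin

lemma flow_0: "\<sigma> \<in> S \<Longrightarrow> \<phi> 0 x \<sigma> = x"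
  using fc_dyn_sys unfolding fc_dyn_sys_def by blast

lemma tshift_in: "\<sigma> \<in> S \<Longrightarrow> \<tau> \<ge> 0 \<Longrightarrow> tshift \<tau> \<sigma> \<in> S"
  using fc_dyn_sys unfolding fc_dyn_sys_def shift_closed_def by blast

lemma flow_add:
  "0 \<le> t \<Longrightarrow> 0 \<le> \<tau> \<Longrightarrow> \<sigma> \<in> S \<Longrightarrow> \<phi> \<tau> (\<phi> t x \<sigma>) (tshift t \<sigma>) = \<phi> (t + \<tau>) x \<sigma>"
  using fc_dyn_sys unfolding fc_dyn_sys_def by blast

lemma flow_split:
  assumes "0 \<le> s" "s \<le> t" "\<sigma> \<in> S"
  shows "\<phi> t x \<sigma> = \<phi> (t - s) (\<phi> s x \<sigma>) (tshift s \<sigma>)"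
  using flow_add[of s "t - s" \<sigma> x] assms by simp

lemma flow_iterate_contraction:
  assumes T: "T \<ge> 0"
    and half: "\<And>x \<sigma>. norm x \<le> \<rho> \<Longrightarrow> \<sigma> \<in> S \<Longrightarrow> 2 * norm (\<phi> T x \<sigma>) \<le> norm x"
  shows "norm x \<le> \<rho> \<Longrightarrow> \<sigma> \<in> S \<Longrightarrow> norm (\<phi> (real n * T) x \<sigma>) \<le> (1/2) ^ n * norm x"
proof (induction n arbitrary: x \<sigma>)
  case 0
  then show ?case by (simp add: flow_0)
next
  case (Suc n)
  have half_x: "2 * norm (\<phi> T x \<sigma>) \<le> norm x"
    using half Suc.prems by blast
  then have "norm (\<phi> T x \<sigma>) \<le> \<rho>"
    using Suc.prems norm_ge_zero[of "\<phi> T x \<sigma>"] by linarith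
  have "\<phi> (real (Suc n) * T) x \<sigma> = \<phi> (real n * T) (\<phi> T x \<sigma>) (tshift T \<sigma>)"
    using flow_split[of T "real (Suc n) * T" \<sigma> x] T Suc.prems by (simp add: algebra_simps)
  then have "norm (\<phi> (real (Suc n) * T) x \<sigma>) \<le> (1/2) ^ n * norm (\<phi> T x \<sigma>)"
    using Suc.IH[OF \<open>norm (\<phi> T x \<sigma>) \<le> \<rho>\<close>] tshift_in Suc.prems T by simp
  also have "\<dots> \<le> (1/2) ^ n * (norm x / 2)"
    using half_x by (intro mult_left_mono) auto
  finally show ?case
    by simp
qed

lemma ULES_of_bound_and_contraction:
  assumes T: "T > 0" and \<rho>: "\<rho> > 0" and M: "M > 0"
    and bounded: "\<And>t x \<sigma>. 0 \<le> t \<Longrightarrow> norm x \<le> \<rho> \<Longrightarrow> \<sigma> \<in> S \<Longrightarrow> norm (\<phi> t x \<sigma>) \<le> M * norm x"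
    and half: "\<And>x \<sigma>. norm x \<le> \<rho> \<Longrightarrow> \<sigma> \<in> S \<Longrightarrow> 2 * norm (\<phi> T x \<sigma>) \<le> norm x"
  shows "ULES S \<phi>"
  unfolding ULES_def
proof (intro exI conjI allI ballI impI)
  fix t :: real and x :: 'x and \<sigma>
  assume t: "0 \<le> t" and x: "x \<in> cball 0 \<rho>" and \<sigma>: "\<sigma> \<in> S"
  define n where "n = nat \<lfloor>t / T\<rfloor>"
  have "0 \<le> t / T" using t T by simp
  then have "real n \<le> t / T" and "t / T < real n + 1"
    unfolding n_def by linarith+
  then have nT: "real n * T \<le> t" and tn: "t < (real n + 1) * T"
    using T by (simp_all add: le_divide_eq divide_less_eq)
  have y: "norm (\<phi> (real n * T) x \<sigma>) \<le> (1/2) ^ n * norm x"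
    using flow_iterate_contraction[OF _ half] T x \<sigma> by simp
  also have "\<dots> \<le> norm x"
    by (simp add: mult_left_le_one_le power_le_one)
  finally have "norm (\<phi> (real n * T) x \<sigma>) \<le> \<rho>"
    using x by simp
  have "norm (\<phi> t x \<sigma>) = norm (\<phi> (t - real n * T) (\<phi> (real n * T) x \<sigma>) (tshift (real n * T) \<sigma>))"
    using flow_split[OF _ nT \<sigma>] T by simp
  also have "\<dots> \<le> M * norm (\<phi> (real n * T) x \<sigma>)"
    using bounded[OF _ \<open>norm (\<phi> (real n * T) x \<sigma>) \<le> \<rho>\<close> tshift_in[OF \<sigma>]] T nT by simp
  also have "\<dots> \<le> M * ((2 * exp (- (ln 2 / T) * t)) * norm x)"
    using y power_half_le_exp[OF T tn] M by (intro mult_left_mono order_trans[OF y] mult_right_mono) auto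
  finally show "norm (\<phi> t x \<sigma>) \<le> 2 * M * exp (- (ln 2 / T) * t) * norm x"
    by (simp add: mult_ac)
qed (use T \<rho> M in auto)

end

locale linear_and_integral_bounds = fc_dynamical_system +
  fixes t1 L R p K :: real
  assumes t1_pos: "t1 > 0" and L_ge_1: "L \<ge> 1" and R_pos: "R > 0" and p_pos: "p > 0"
    and K_nonneg: "K \<ge> 0"
    and linear_bound:
      "\<And>t x \<sigma>. t \<in> {0..t1} \<Longrightarrow> norm x \<le> R \<Longrightarrow> \<sigma> \<in> S \<Longrightarrow> norm (\<phi> t x \<sigma>) \<le> L * norm x"
    and integral_bound: "int_estimate S \<phi> p (\<lambda>_. K) R"
begin

lemma window_bound:
  assumes x: "norm x \<le> R" and \<sigma>: "\<sigma> \<in> S" and C: "C > 0" and a: "a \<ge> 0" and d: "d \<ge> 0"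
    and through: "\<And>s. s \<in> {a..a+d} \<Longrightarrow> norm (\<phi> t x \<sigma>) \<le> C * norm (\<phi> s x \<sigma>)"
  shows "d powr (1/p) * norm (\<phi> t x \<sigma>) \<le> C * K * norm x"
proof -
  have "d powr (1/p) * (norm (\<phi> t x \<sigma>) / C) \<le> K * norm x"
  proof (rule window_bound_of_nn_integral_powr[OF p_pos a d])
    show "norm (\<phi> t x \<sigma>) / C \<le> norm (\<phi> s x \<sigma>)" if "s \<in> {a..a+d}" for s
      using through[OF that] C by (simp add: divide_le_eq mult.commute)
    show "(\<integral>\<^sup>+ s \<in> {0..}. ennreal (norm (\<phi> s x \<sigma>) powr p) \<partial>lborel) \<le> ennreal ((K * norm x) powr p)"
      by (rule int_estimate_powr_mult[OF integral_bound K_nonneg x \<sigma>])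
  qed (use C K_nonneg in auto)
  then show ?thesis
    using C by (simp add: field_simps)
qed

lemma two_window_bound:
  assumes x: "norm x \<le> R / L" and t: "0 \<le> t" "t \<le> 2 * t1" and \<sigma>: "\<sigma> \<in> S"
  shows "norm (\<phi> t x \<sigma>) \<le> L\<^sup>2 * norm x"
proof -
  have "R / L \<le> R" using L_ge_1 R_pos by (simp add: divide_le_eq)
  then have xR: "norm x \<le> R" using x by linarith
  have L_L2: "L * norm x \<le> L\<^sup>2 * norm x"
    using L_ge_1 by (simp add: power2_eq_square mult_right_mono)
  show ?thesis
  proof (cases "t \<le> t1")
    case True
    then show ?thesis using linear_bound[of t x \<sigma>] t xR \<sigma> L_L2 by auto
  next
    case False
    have y: "norm (\<phi> t1 x \<sigma>) \<le> L * norm x"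
      using linear_bound[of t1 x \<sigma>] t1_pos xR \<sigma> by auto
    also have "\<dots> \<le> R" using x L_ge_1 by (simp add: le_divide_eq mult.commute)
    finally have "norm (\<phi> (t - t1) (\<phi> t1 x \<sigma>) (tshift t1 \<sigma>)) \<le> L * norm (\<phi> t1 x \<sigma>)"
      using linear_bound False t \<sigma> tshift_in t1_pos by simp
    also have "\<dots> \<le> L * (L * norm x)"
      using y L_ge_1 by (simp add: mult_left_mono)
    finally show ?thesis
      using flow_split[of t1 t \<sigma> x] False \<sigma> t1_pos by (simp add: power2_eq_square)
  qed
qed

text \<open>Each \<open>s \<in> [t - 2t\<^sub>1, t - t\<^sub>1]\<close> reaches \<open>t\<close> within a time in \<open>[t\<^sub>1, 2t\<^sub>1]\<close>,
  so the window condition comes from \<open>two_window_bound\<close>.\<close>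
lemma bound_after_two_windows:
  assumes x: "norm x \<le> R" and \<sigma>: "\<sigma> \<in> S" and t: "2 * t1 \<le> t"
    and small: "\<And>s. s \<in> {t - 2 * t1..t - t1} \<Longrightarrow> norm (\<phi> s x \<sigma>) \<le> R / L"
  shows "t1 powr (1/p) * norm (\<phi> t x \<sigma>) \<le> L\<^sup>2 * K * norm x"
proof (rule window_bound[OF x \<sigma>])
  fix s assume s: "s \<in> {t - 2 * t1..t - 2 * t1 + t1}"
  then have "norm (\<phi> s x \<sigma>) \<le> R / L" and "0 \<le> s" "0 \<le> t - s" "t - s \<le> 2 * t1"
    using small[of s] t by auto
  then have "norm (\<phi> (t - s) (\<phi> s x \<sigma>) (tshift s \<sigma>)) \<le> L\<^sup>2 * norm (\<phi> s x \<sigma>)"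
    using two_window_bound tshift_in[OF \<sigma>] by blast
  then show "norm (\<phi> t x \<sigma>) \<le> L\<^sup>2 * norm (\<phi> s x \<sigma>)"
    using flow_split[of s t \<sigma> x] s t t1_pos \<sigma> by simp
qed (use t t1_pos L_ge_1 in auto)

lemma bound_on_multiples:
  assumes M: "L\<^sup>2 \<le> M" "L\<^sup>2 * K \<le> t1 powr (1/p) * M" and \<rho>: "0 \<le> \<rho>" "M * \<rho> \<le> R / L"
    and x: "norm x \<le> \<rho>" and \<sigma>: "\<sigma> \<in> S"
  shows "0 \<le> t \<Longrightarrow> t \<le> real n * t1 \<Longrightarrow> norm (\<phi> t x \<sigma>) \<le> M * norm x"
proof -
  have "1 \<le> M"
    using M(1) L_ge_1 one_le_power[of L 2] by linarith
  then have Mx_RL: "M * norm x \<le> R / L"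
    using \<rho>(2) x mult_left_mono[of "norm x" \<rho> M] by linarith
  moreover have "norm x \<le> M * norm x"
    using \<open>1 \<le> M\<close> mult_right_mono[of 1 M "norm x"] by simp
  ultimately have x_RL: "norm x \<le> R / L"
    by linarith
  moreover have "R / L \<le> R"
    using L_ge_1 R_pos by (simp add: divide_le_eq)
  ultimately have xR: "norm x \<le> R"
    by linarith
  show "0 \<le> t \<Longrightarrow> t \<le> real n * t1 \<Longrightarrow> norm (\<phi> t x \<sigma>) \<le> M * norm x"
  proof (induction n arbitrary: t)
    case 0
    then show ?case
      using flow_0[OF \<sigma>] \<open>1 \<le> M\<close> by (simp add: mult_le_cancel_right1)
  next
    case (Suc n)
    consider "t \<le> real n * t1" | "t \<le> 2 * t1" | "2 * t1 \<le> t" "real n * t1 \<le> t"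
      by linarith
    then show ?case
    proof cases
      case 1
      then show ?thesis using Suc by blast
    next
      case 2
      then have "norm (\<phi> t x \<sigma>) \<le> L\<^sup>2 * norm x"
        using two_window_bound x_RL Suc.prems \<sigma> by simp
      then show ?thesis
        using M(1) mult_right_mono[of "L\<^sup>2" M "norm x"] by simp
    next
      case 3
      have "norm (\<phi> s x \<sigma>) \<le> R / L" if s: "s \<in> {t - 2 * t1..t - t1}" for s
      proof -
        have "0 \<le> s" "s \<le> real n * t1"
          using s 3 Suc.prems(2) by (auto simp: algebra_simps)
        then show ?thesis
          using Suc.IH[of s] Mx_RL by linarith
      qed
      then have "t1 powr (1/p) * norm (\<phi> t x \<sigma>) \<le> L\<^sup>2 * K * norm x"
        using bound_after_two_windows[OF xR \<sigma> 3(1)] by blast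
      also have "\<dots> \<le> t1 powr (1/p) * (M * norm x)"
        using M(2) mult_right_mono[of "L\<^sup>2 * K" "t1 powr (1/p) * M" "norm x"] by simp
      finally show ?thesis
        using t1_pos by simp
    qed
  qed
qed

lemma uniform_bound:
  obtains M \<rho> where "M \<ge> 1" and "\<rho> > 0" and "\<rho> \<le> R"
    and "\<And>t x \<sigma>. 0 \<le> t \<Longrightarrow> norm x \<le> \<rho> \<Longrightarrow> \<sigma> \<in> S \<Longrightarrow> norm (\<phi> t x \<sigma>) \<le> M * norm x"
proof -
  define M where "M = max (L\<^sup>2) (L\<^sup>2 * K / t1 powr (1/p))"
  define \<rho> where "\<rho> = R / (L * M)"
  have "L\<^sup>2 \<ge> 1" using L_ge_1 by (simp add: one_le_power)
  then have M1: "M \<ge> 1" unfolding M_def by linarith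
  have "L\<^sup>2 * K = t1 powr (1/p) * (L\<^sup>2 * K / t1 powr (1/p))"
    using t1_pos by simp
  also have "\<dots> \<le> t1 powr (1/p) * M"
    unfolding M_def by (intro mult_left_mono) auto
  finally have M: "L\<^sup>2 \<le> M" "L\<^sup>2 * K \<le> t1 powr (1/p) * M"
    unfolding M_def by auto
  have "L * M \<ge> 1"
    using L_ge_1 M1 mult_mono[of 1 L 1 M] by simp
  then have \<rho>: "\<rho> > 0" "M * \<rho> \<le> R / L" "\<rho> \<le> R"
    unfolding \<rho>_def using R_pos L_ge_1 M1 by (auto simp: field_simps)
  have "norm (\<phi> t x \<sigma>) \<le> M * norm x" if "0 \<le> t" "norm x \<le> \<rho>" "\<sigma> \<in> S" for t x \<sigma>
  proof -
    have "t \<le> of_int \<lceil>t / t1\<rceil> * t1"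
      using t1_pos by (simp add: pos_divide_le_eq[symmetric])
    also have "\<dots> = real (nat \<lceil>t / t1\<rceil>) * t1"
      using that t1_pos by simp
    finally show ?thesis
      using bound_on_multiples[OF M less_imp_le[OF \<rho>(1)] \<rho>(2) that(2,3) that(1)] by blast
  qed
  then show ?thesis using that M1 \<rho> by blast
qed

context
  fixes M \<rho> :: real
  assumes M_ge_1: "M \<ge> 1" and \<rho>_le_R: "\<rho> \<le> R"
    and bounded: "\<And>t x \<sigma>. 0 \<le> t \<Longrightarrow> norm x \<le> \<rho> \<Longrightarrow> \<sigma> \<in> S \<Longrightarrow> norm (\<phi> t x \<sigma>) \<le> M * norm x"
begin

lemma root_time_decay:
  assumes x: "norm x \<le> \<rho> / M" and t: "0 \<le> t" and \<sigma>: "\<sigma> \<in> S"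
  shows "t powr (1/p) * norm (\<phi> t x \<sigma>) \<le> M * K * norm x"
proof -
  have Mx: "M * norm x \<le> \<rho>"
    using x M_ge_1 by (simp add: le_divide_eq mult.commute)
  moreover have "norm x \<le> M * norm x"
    using M_ge_1 mult_right_mono[of 1 M "norm x"] by simp
  ultimately have x\<rho>: "norm x \<le> \<rho>"
    by linarith
  have "norm x \<le> R" and "M > 0"
    using x\<rho> \<rho>_le_R M_ge_1 by simp_all
  then show ?thesis
  proof (rule window_bound[OF _ \<sigma> _ order_refl t])
    fix s assume "s \<in> {0..0 + t}"
    then have s: "0 \<le> s" "s \<le> t"
      by simp_all
    have "norm (\<phi> s x \<sigma>) \<le> \<rho>"
      using bounded[OF s(1) x\<rho> \<sigma>] Mx by simp
    then have "norm (\<phi> (t - s) (\<phi> s x \<sigma>) (tshift s \<sigma>)) \<le> M * norm (\<phi> s x \<sigma>)"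
      using bounded s tshift_in \<sigma> by simp
    then show "norm (\<phi> t x \<sigma>) \<le> M * norm (\<phi> s x \<sigma>)"
      using flow_split[OF s \<sigma>, of x] by simp
  qed
qed

lemma contraction:
  assumes x: "norm x \<le> \<rho> / M" and \<sigma>: "\<sigma> \<in> S"
  shows "2 * norm (\<phi> ((2 * M * K + 1) powr p) x \<sigma>) \<le> norm x"
proof -
  define T where "T = (2 * M * K + 1) powr p"
  have MK: "M * K \<ge> 0"
    using M_ge_1 K_nonneg by simp
  have "T \<ge> 0" and T: "T powr (1/p) = 2 * M * K + 1"
    unfolding T_def using MK p_pos by (simp_all add: powr_powr)
  have "(2 * M * K + 1) * (2 * norm (\<phi> T x \<sigma>)) = 2 * (T powr (1/p) * norm (\<phi> T x \<sigma>))"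
    by (simp only: T mult_ac)
  also have "\<dots> \<le> 2 * (M * K * norm x)"
    using root_time_decay[OF x \<open>T \<ge> 0\<close> \<sigma>] by simp
  also have "\<dots> \<le> (2 * M * K + 1) * norm x"
    by (simp add: algebra_simps)
  finally have "2 * norm (\<phi> T x \<sigma>) \<le> norm x"
    using MK mult_le_cancel_left_pos[of "2 * M * K + 1"] by simp
  then show ?thesis
    unfolding T_def .
qed

end

theorem exponentially_stable: "ULES S \<phi>"
proof -
  obtain M \<rho> where M: "M \<ge> 1" and \<rho>: "\<rho> > 0" "\<rho> \<le> R"
    and bounded: "\<And>t x \<sigma>. 0 \<le> t \<Longrightarrow> norm x \<le> \<rho> \<Longrightarrow> \<sigma> \<in> S \<Longrightarrow> norm (\<phi> t x \<sigma>) \<le> M * norm x"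
    using uniform_bound by metis
  have "\<rho> / M \<le> \<rho>"
    using M \<rho> by (simp add: divide_le_eq mult_le_cancel_left1)
  have "M * K \<ge> 0"
    using M K_nonneg by simp
  then have "(2 * M * K + 1) powr p > 0"
    by simp
  then show ?thesis
  proof (rule ULES_of_bound_and_contraction)
    show "\<rho> / M > 0" and "M > 0"
      using M \<rho> by simp_all
    show "norm (\<phi> t x \<sigma>) \<le> M * norm x" if "0 \<le> t" "norm x \<le> \<rho> / M" "\<sigma> \<in> S" for t x \<sigma>
      using bounded[OF that(1) _ that(3)] that(2) \<open>\<rho> / M \<le> \<rho>\<close> by simp
    show "2 * norm (\<phi> ((2 * M * K + 1) powr p) x \<sigma>) \<le> norm x" if "norm x \<le> \<rho> / M" "\<sigma> \<in> S" for x \<sigma>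
      by (rule contraction[OF M \<rho>(2) bounded that])
  qed
qed

end

theorem theorem1:
  fixes S :: "(real \<Rightarrow> 'q) set"
    and \<phi> :: "real \<Rightarrow> 'x::banach \<Rightarrow> (real \<Rightarrow> 'q) \<Rightarrow> 'x"
    and t1 G0 :: real and \<beta> :: "real \<Rightarrow> real"
  assumes sys: "fc_dyn_sys S \<phi>"
    and t1: "t1 > 0" and G0: "G0 > 0"
    and beta: "class_Kinf \<beta>"
    and beta_lim: "Limsup (at_right 0) (\<lambda>r. ereal (\<beta> r / r)) < \<infinity>"
    and bound: "\<And>t x \<sigma>. t \<in> {0..t1} \<Longrightarrow> \<sigma> \<in> S \<Longrightarrow> norm (\<phi> t x \<sigma>) \<le> G0 * \<beta> (norm x)"
  shows "(ULES S \<phi> \<longrightarrow>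
           (\<forall>p>0. \<exists>k R. nondecr_nonneg k \<and> R > 0 \<and> int_estimate S \<phi> p k R))
       \<and> ((\<forall>p>0. \<exists>k R. nondecr_nonneg k \<and> R > 0 \<and> int_estimate S \<phi> p k R) \<longrightarrow>
           (\<exists>p>0. \<exists>k R. nondecr_nonneg k \<and> R > 0 \<and> int_estimate S \<phi> p k R))
       \<and> ((\<exists>p>0. \<exists>k R. nondecr_nonneg k \<and> R > 0 \<and> int_estimate S \<phi> p k R) \<longrightarrow> ULES S \<phi>)"
proof (intro conjI impI)
  show "\<forall>p>0. \<exists>k R. nondecr_nonneg k \<and> R > 0 \<and> int_estimate S \<phi> p k R" if "ULES S \<phi>"
    using ULES_imp_int_estimate[OF that] by blast
  show "\<exists>p>0. \<exists>k R. nondecr_nonneg k \<and> R > 0 \<and> int_estimate S \<phi> p k R"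
    if "\<forall>p>0. \<exists>k R. nondecr_nonneg k \<and> R > 0 \<and> int_estimate S \<phi> p k R"
    using that zero_less_one by blast
next
  assume "\<exists>p>0. \<exists>k R. nondecr_nonneg k \<and> R > 0 \<and> int_estimate S \<phi> p k R"
  then obtain p k R where p: "p > 0" and k: "nondecr_nonneg k" and R: "R > 0"
    and est: "int_estimate S \<phi> p k R" by blast
  have "class_K \<beta>" and "k R \<ge> 0"
    using beta k R unfolding class_Kinf_def nondecr_nonneg_def by simp_all
  obtain L where "L \<ge> 1"
    and "\<And>t x \<sigma>. t \<in> {0..t1} \<Longrightarrow> norm x \<le> R \<Longrightarrow> \<sigma> \<in> S \<Longrightarrow> norm (\<phi> t x \<sigma>) \<le> L * norm x"
    using linear_bound_of_class_K_bound[where \<phi> = \<phi> and I = "{0..t1}" and S = S,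
        OF \<open>class_K \<beta>\<close> beta_lim R less_imp_le[OF G0] bound]
    by metis
  then interpret linear_and_integral_bounds S \<phi> t1 L R p "k R"
    using int_estimate_const_of_nondecr[OF k p R est]
    by unfold_locales (simp_all add: sys t1 R p \<open>k R \<ge> 0\<close>)
  show "ULES S \<phi>"
    by (rule exponentially_stable)
qed

end
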